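(* Let $\Sigma_C\subseteq N_C$ and $\Sigma_R\subseteq N_R$ be finite, let $B\in N_C\setminus\Sigma_C$, and let $\mathcal R$ be the TBox consisting of the axioms $B\sqsubseteq A$ for every $A\in\Sigma_C$ and $B\sqsubseteq\forall r.B$ for every $r\in\Sigma_R$. Let $\mathcal J$ be a model of $\mathcal R$ and $\mathcal I$ an interpretation with $\Delta^{\mathcal I}=\Delta^{\mathcal J}\setminus B^{\mathcal J}$, $A^{\mathcal I}=A^{\mathcal J}\setminus B^{\mathcal J}$ for every $A\in N_C$, and $r^{\mathcal I}=\{(x,y)\in r^{\mathcal J}\mid x\notin B^{\mathcal J},\ y\notin B^{\mathcal J}\}$ for every $r\in N_R$. Then for every $\mathcal{FL}_{\bot\mathit{reg}}$ concept description $K$ containing only concept names from $\Sigma_C$ and role names from $\Sigma_R$ we have $K^{\mathcal I}=(K^B)^{\mathcal J}\setminus B^{\mathcal J}$, where $K^B$ is obtained from $K$ by replacing every occurrence of $\bot$ with $B$.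
   Context: Let $N_C$ and $N_R$ be disjoint countably infinite sets of concept names and role names. Regular role expressions are generated by $E ::= \emptyset \mid \varepsilon \mid r \mid (E+E) \mid (EE) \mid E^{*}$ with $r\in N_R$, with languages $\mathcal L(E)\subseteq N_R^*$. $\mathcal{FL}_{\bot\mathit{reg}}$ concept descriptions: $C ::= A \mid \top \mid \bot \mid (C\sqcap C) \mid \forall E.C$ with $A\in N_C$. An interpretation $\mathcal I$ has a domain $\Delta^{\mathcal I}$, $A^{\mathcal I}\subseteq\Delta^{\mathcal I}$, $r^{\mathcal I}\subseteq(\Delta^{\mathcal I})^2$; $E^{\mathcal I}$ is the union over $r_1\cdots r_n\in\mathcal L(E)$ of $r_1^{\mathcal I}\circ\cdots\circ r_n^{\mathcal I}$ (identity for the empty word); $\top^{\mathcal I}=\Delta^{\mathcal I}$, $\bot^{\mathcal I}=\emptyset$, $\sqcap$ is intersection, $(\forall E.C)^{\mathcal I}=\{x\in\Delta^{\mathcal I}\mid y\in C^{\mathcal I}$ whenever $(x,y)\in E^{\mathcal I}\}$. $\mathcal J$ is a model of a TBox (finite set of axioms $K\sqsubseteq M$) if $K^{\mathcal J}\subseteq M^{\mathcal J}$ for all its axioms. *)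

theory Defs
  imports Main
begin

datatype 'r rexp = Empty | Eps | Role 'r | Plus "'r rexp" "'r rexp"
  | Conc "'r rexp" "'r rexp" | Star "'r rexp"

fun lang :: "'r rexp \<Rightarrow> 'r list set" where
  "lang Empty = {}"
| "lang Eps = {[]}"
| "lang (Role r) = {[r]}"
| "lang (Plus e f) = lang e \<union> lang f"
| "lang (Conc e f) = {u @ v | u v. u \<in> lang e \<and> v \<in> lang f}"
| "lang (Star e) = {concat ws | ws. set ws \<subseteq> lang e}"

record ('c, 'r, 'd) interp =
  dom :: "'d set"
  cint :: "'c \<Rightarrow> 'd set"
  rint :: "'r \<Rightarrow> ('d \<times> 'd) set"

definition is_interp :: "('c, 'r, 'd) interp \<Rightarrow> bool" where
  "is_interp I \<longleftrightarrow> (\<forall>A. cint I A \<subseteq> dom I) \<and> (\<forall>r. rint I r \<subseteq> dom I \<times> dom I)"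

fun word_int :: "('c, 'r, 'd) interp \<Rightarrow> 'r list \<Rightarrow> ('d \<times> 'd) set" where
  "word_int I [] = Id_on (dom I)"
| "word_int I (r # w) = rint I r O word_int I w"

definition rexp_int :: "('c, 'r, 'd) interp \<Rightarrow> 'r rexp \<Rightarrow> ('d \<times> 'd) set" where
  "rexp_int I E = (\<Union>w \<in> lang E. word_int I w)"

datatype ('c, 'r) concept = CName 'c | Top | Bot
  | CAnd "('c, 'r) concept" "('c, 'r) concept"
  | All "'r rexp" "('c, 'r) concept"

fun cext :: "('c, 'r, 'd) interp \<Rightarrow> ('c, 'r) concept \<Rightarrow> 'd set" where
  "cext I (CName A) = cint I A"
| "cext I Top = dom I"
| "cext I Bot = {}"
| "cext I (CAnd C D) = cext I C \<inter> cext I D"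
| "cext I (All E C) = {x \<in> dom I. \<forall>y. (x, y) \<in> rexp_int I E \<longrightarrow> y \<in> cext I C}"

fun roles_rexp :: "'r rexp \<Rightarrow> 'r set" where
  "roles_rexp Empty = {}"
| "roles_rexp Eps = {}"
| "roles_rexp (Role r) = {r}"
| "roles_rexp (Plus e f) = roles_rexp e \<union> roles_rexp f"
| "roles_rexp (Conc e f) = roles_rexp e \<union> roles_rexp f"
| "roles_rexp (Star e) = roles_rexp e"

fun cnames :: "('c, 'r) concept \<Rightarrow> 'c set" where
  "cnames (CName A) = {A}"
| "cnames Top = {}"
| "cnames Bot = {}"
| "cnames (CAnd C D) = cnames C \<union> cnames D"
| "cnames (All E C) = cnames C"

fun rnames :: "('c, 'r) concept \<Rightarrow> 'r set" where
  "rnames (CName A) = {}"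
| "rnames Top = {}"
| "rnames Bot = {}"
| "rnames (CAnd C D) = rnames C \<union> rnames D"
| "rnames (All E C) = roles_rexp E \<union> rnames C"

fun replace_bot :: "'c \<Rightarrow> ('c, 'r) concept \<Rightarrow> ('c, 'r) concept" where
  "replace_bot B (CName A) = CName A"
| "replace_bot B Top = Top"
| "replace_bot B Bot = CName B"
| "replace_bot B (CAnd C D) = CAnd (replace_bot B C) (replace_bot B D)"
| "replace_bot B (All E C) = All E (replace_bot B C)"

type_synonym ('c, 'r) tbox = "(('c, 'r) concept \<times> ('c, 'r) concept) set"

definition is_model :: "('c, 'r, 'd) interp \<Rightarrow> ('c, 'r) tbox \<Rightarrow> bool" where
  "is_model J T \<longleftrightarrow> (\<forall>(K, M) \<in> T. cext J K \<subseteq> cext J M)"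

end

theory Submission
  imports Defs
begin

text \<open>Elements of \<open>B\<^sup>\<J>\<close> satisfy every \<open>K\<^sup>B\<close>: the axioms of \<open>\<R>\<close> put them into every concept
  name of the signature and make \<open>B\<^sup>\<J>\<close> closed under the roles of the signature, hence under
  every regular role expression over it. Consequently a \<open>\<J>\<close>-path that starts outside \<open>B\<^sup>\<J>\<close>
  and ends outside \<open>B\<^sup>\<J>\<close> never enters \<open>B\<^sup>\<J>\<close>, so it is already an \<open>\<I>\<close>-path. A structural
  induction on \<open>K\<close> then shows \<open>K\<^sup>\<I> = (K\<^sup>B)\<^sup>\<J> \<setminus> B\<^sup>\<J>\<close>: for a value restriction, successors
  inside \<open>B\<^sup>\<J>\<close> satisfy \<open>K\<^sup>B\<close> anyway, and the others are exactly the \<open>\<I>\<close>-successors.\<close>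

lemma lang_subset_lists_roles_rexp: "lang E \<subseteq> lists (roles_rexp E)"
  by (induction E) fastforce+

lemma Range_word_int_subset_dom: "Range (word_int I w) \<subseteq> dom I"
  by (induction w) auto

lemma word_int_Image_subset:
  assumes "\<And>r. r \<in> set w \<Longrightarrow> rint J r `` S \<subseteq> S"
  shows "word_int J w `` S \<subseteq> S"
  using assms
proof (induction w)
  case Nil
  then show ?case by auto
next
  case (Cons r w)
  have "word_int J (r # w) `` S = word_int J w `` (rint J r `` S)"
    by (simp add: relcomp_Image)
  also have "\<dots> \<subseteq> word_int J w `` S"
    using Cons.prems by (intro Image_mono) auto
  also have "\<dots> \<subseteq> S"
    using Cons by simp
  finally show ?case .
qed

lemma rexp_int_Image_subset:
  assumes "\<And>r. r \<in> roles_rexp E \<Longrightarrow> rint J r `` S \<subseteq> S"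
  shows "rexp_int J E `` S \<subseteq> S"
proof -
  have "word_int J w `` S \<subseteq> S" if "w \<in> lang E" for w
  proof -
    have "set w \<subseteq> roles_rexp E"
      using that lang_subset_lists_roles_rexp by blast
    then show ?thesis
      using assms by (intro word_int_Image_subset) auto
  qed
  then show ?thesis
    unfolding rexp_int_def by blast
qed

lemma is_modelD: "is_model J T \<Longrightarrow> (K, M) \<in> T \<Longrightarrow> cext J K \<subseteq> cext J M"
  unfolding is_model_def by blast

locale closed_concept_removal =
  fixes J I :: "('c, 'r, 'd) interp" and B :: 'c and SigC :: "'c set" and SigR :: "'r set"
  assumes is_interp_J: "is_interp J"
    and B_subset_cint: "A \<in> SigC \<Longrightarrow> cint J B \<subseteq> cint J A"
    and B_closed: "r \<in> SigR \<Longrightarrow> rint J r `` cint J B \<subseteq> cint J B"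
    and dom_I: "dom I = dom J - cint J B"
    and cint_I: "cint I A = cint J A - cint J B"
    and rint_I: "rint I r = {(x, y) \<in> rint J r. x \<notin> cint J B \<and> y \<notin> cint J B}"
begin

lemma word_int_I_subset: "word_int I w \<subseteq> word_int J w"
  by (induction w) (auto simp: dom_I rint_I)

lemma word_int_I_if_word_int_J:
  assumes "(x, y) \<in> word_int J w" and "x \<in> dom I" and "y \<notin> cint J B" and "set w \<subseteq> SigR"
  shows "(x, y) \<in> word_int I w"
  using assms
proof (induction w arbitrary: x)
  case Nil
  then show ?case by (auto simp: dom_I)
next
  case (Cons r w)
  then obtain u where xu: "(x, u) \<in> rint J r" and uy: "(u, y) \<in> word_int J w"
    by auto
  have "word_int J w `` cint J B \<subseteq> cint J B"
    using Cons.prems B_closed by (intro word_int_Image_subset) auto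
  then have "u \<notin> cint J B"
    using uy \<open>y \<notin> cint J B\<close> by blast
  moreover have "u \<in> dom J"
    using xu is_interp_J by (auto simp: is_interp_def)
  ultimately show ?case
    using Cons xu uy by (auto simp: dom_I rint_I)
qed

lemma rexp_int_I_subset: "rexp_int I E \<subseteq> rexp_int J E"
  unfolding rexp_int_def using word_int_I_subset by blast

lemma rexp_int_I_if_rexp_int_J:
  assumes "(x, y) \<in> rexp_int J E" and "x \<in> dom I" and "y \<notin> cint J B"
    and "roles_rexp E \<subseteq> SigR"
  shows "(x, y) \<in> rexp_int I E"
proof -
  obtain w where "w \<in> lang E" and "(x, y) \<in> word_int J w"
    using assms(1) by (auto simp: rexp_int_def)
  moreover from \<open>w \<in> lang E\<close> have "set w \<subseteq> SigR"
    using lang_subset_lists_roles_rexp assms(4) by blast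
  ultimately have "(x, y) \<in> word_int I w"
    using word_int_I_if_word_int_J assms(2,3) by blast
  with \<open>w \<in> lang E\<close> show ?thesis
    by (auto simp: rexp_int_def)
qed

lemma B_subset_cext_replace_bot:
  "cnames K \<subseteq> SigC \<Longrightarrow> rnames K \<subseteq> SigR \<Longrightarrow> cint J B \<subseteq> cext J (replace_bot B K)"
proof (induction K)
  case (CName A)
  then show ?case using B_subset_cint by simp
next
  case Top
  then show ?case using is_interp_J by (simp add: is_interp_def)
next
  case (All E C)
  have "rexp_int J E `` cint J B \<subseteq> cint J B"
    using All.prems B_closed by (intro rexp_int_Image_subset) auto
  then show ?case
    using All is_interp_J by (auto simp: is_interp_def)
qed auto

theorem cext_eq_cext_replace_bot_minus_B:
  "cnames K \<subseteq> SigC \<Longrightarrow> rnames K \<subseteq> SigR \<Longrightarrow> cext I K = cext J (replace_bot B K) - cint J B"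
proof (induction K)
  case (CName A)
  then show ?case by (simp add: cint_I)
next
  case Top
  then show ?case by (simp add: dom_I)
next
  case (All E C)
  have C_sig: "cnames C \<subseteq> SigC" "rnames C \<subseteq> SigR" and E_sig: "roles_rexp E \<subseteq> SigR"
    using All.prems by auto
  note IH = All.IH[OF C_sig] and B_sat_C = B_subset_cext_replace_bot[OF C_sig]
  show ?case
  proof
    show "cext I (All E C) \<subseteq> cext J (replace_bot B (All E C)) - cint J B"
    proof
      fix x assume x: "x \<in> cext I (All E C)"
      have "y \<in> cext J (replace_bot B C)" if "(x, y) \<in> rexp_int J E" for y
      proof (cases "y \<in> cint J B")
        case False
        then have "(x, y) \<in> rexp_int I E"
          using rexp_int_I_if_rexp_int_J[OF that _ _ E_sig] x by simp
        then show ?thesis using x IH by auto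
      qed (use B_sat_C in auto)
      then show "x \<in> cext J (replace_bot B (All E C)) - cint J B"
        using x by (auto simp: dom_I)
    qed
  next
    show "cext J (replace_bot B (All E C)) - cint J B \<subseteq> cext I (All E C)"
    proof
      fix x assume x: "x \<in> cext J (replace_bot B (All E C)) - cint J B"
      have "y \<in> cext I C" if xy: "(x, y) \<in> rexp_int I E" for y
      proof -
        obtain w where "(x, y) \<in> word_int I w"
          using xy unfolding rexp_int_def by blast
        then have "y \<in> dom I"
          using Range_word_int_subset_dom[of I w] by blast
        moreover have "(x, y) \<in> rexp_int J E"
          using xy rexp_int_I_subset[of E] by blast
        then have "y \<in> cext J (replace_bot B C)"
          using x by simp
        ultimately show ?thesis using IH by (auto simp: dom_I)
      qed
      then show "x \<in> cext I (All E C)"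
        using x by (auto simp: dom_I)
    qed
  qed
qed auto

end

lemma closed_concept_removal_if_model:
  assumes "is_interp J"
    and "is_model J ({(CName B, CName A) | A. A \<in> SigC}
                     \<union> {(CName B, All (Role r) (CName B)) | r. r \<in> SigR})"
    and "dom I = dom J - cint J B"
    and "\<And>A. cint I A = cint J A - cint J B"
    and "\<And>r. rint I r = {(x, y) \<in> rint J r. x \<notin> cint J B \<and> y \<notin> cint J B}"
  shows "closed_concept_removal J I B SigC SigR"
proof
  show "cint J B \<subseteq> cint J A" if "A \<in> SigC" for A
  proof -
    have "(CName B, CName A) \<in> {(CName B, CName A) | A. A \<in> SigC}"
      using that by blast
    then show ?thesis
      using is_modelD[OF assms(2), of "CName B" "CName A"] by simp
  qed
  show "rint J r `` cint J B \<subseteq> cint J B" if "r \<in> SigR" for r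
  proof -
    have "(CName B, All (Role r) (CName B)) \<in> {(CName B, All (Role r) (CName B)) | r. r \<in> SigR}"
      using that by blast
    then have "cint J B \<subseteq> cext J (All (Role r) (CName B))"
      using is_modelD[OF assms(2), of "CName B" "All (Role r) (CName B)"] by simp
    moreover have "rint J r \<subseteq> rexp_int J (Role r)"
      using assms(1) by (force simp: is_interp_def rexp_int_def)
    ultimately show ?thesis by auto
  qed
qed (fact assms)+

theorem lemma7:
  fixes SigC :: "'c set" and SigR :: "'r set" and B :: 'c
    and R :: "('c, 'r) tbox"
    and J I :: "('c, 'r, 'd) interp"
  assumes "infinite (UNIV :: 'c set)" and "infinite (UNIV :: 'r set)"
    and "finite SigC" and "finite SigR" and "B \<notin> SigC"
    and "R = {(CName B, CName A) | A. A \<in> SigC} \<union> {(CName B, All (Role r) (CName B)) | r. r \<in> SigR}"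
    and "is_interp J" and "is_model J R"
    and "dom I = dom J - cint J B"
    and "\<And>A. cint I A = cint J A - cint J B"
    and "\<And>r. rint I r = {(x, y) \<in> rint J r. x \<notin> cint J B \<and> y \<notin> cint J B}"
  shows "\<forall>K. cnames K \<subseteq> SigC \<and> rnames K \<subseteq> SigR \<longrightarrow>
           cext I K = cext J (replace_bot B K) - cint J B"
proof -
  interpret closed_concept_removal J I B SigC SigR
    using assms(7) assms(8)[unfolded assms(6)] assms(9-11)
    by (rule closed_concept_removal_if_model)
  show ?thesis
    using cext_eq_cext_replace_bot_minus_B by blast
qed

end
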